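(* Let $K\subset\mathbb{R}^n$ be a convex body, $H$ an $i$-dimensional linear subspace of $\mathbb{R}^n$ with $1\le i\le n-1$, and let $f:P_HK\to[0,\infty)$ be the concave function $f(y):=\mathrm{vol}\big(K\cap(y+H^\perp)\big)^{\frac{1}{n-i}}$. Let $y_0\in P_HK$ be such that $$\{(y,t):y\in P_HK,\ 0\le t\le f(y)\}=\mathrm{conv}\big((P_HK\times\{0\})\cup\{(y_0,\|f\|_\infty)\}\big).$$ Then for every $y\in P_HK$, $$K\cap(y+H^\perp)=z(y)+\big(1-\|y-y_0\|_{P_HK}\big)\big(K\cap(y_0+H^\perp)\big)$$ for some $z(y)\in\mathbb{R}^n$.
   Context: A convex body is a compact convex subset of $\mathbb{R}^n$ with non-empty interior. $P_H$ is orthogonal projection onto $H$; $\mathrm{vol}$ is $(n-i)$-dimensional Lebesgue measure on the affine subspace $y+H^\perp$; $\|f\|_\infty=\max f$; $\mathrm{conv}$ is convex hull. Here $\|y-y_0\|_{P_HK}:=\min\{\lambda\ge0: y\in y_0+\lambda(P_HK-y_0)\}$ is the Minkowski functional of $y-y_0$ with respect to $P_HK$ centered at $y_0$. *)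

theory Defs
  imports "HOL-Analysis.Analysis" "HOL-Probability.Probability"
begin

definition proj_onto :: "'a::euclidean_space set \<Rightarrow> 'a \<Rightarrow> 'a" where
  "proj_onto H x = (SOME h. h \<in> H \<and> x - h \<in> orthogonal_comp H)"

definition onb_of :: "'a::euclidean_space set \<Rightarrow> 'a set" where
  "onb_of V = (SOME B. B \<subseteq> V \<and> pairwise orthogonal B \<and> (\<forall>b\<in>B. norm b = 1) \<and> span B = V)"

text \<open>k-dimensional Lebesgue measure (k = dim V) of a set A lying in an affine
  subspace a + V: A is mapped isometrically to R^k via coordinates with respect to an
  orthonormal basis of V, and measured there by the product Lebesgue measure.\<close>
definition flat_vol :: "'a::euclidean_space set \<Rightarrow> 'a set \<Rightarrow> real" where
  "flat_vol V A = measure (PiM (onb_of V) (\<lambda>_. lborel))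
                     ((\<lambda>x. restrict (\<lambda>b. x \<bullet> b) (onb_of V)) ` A)"

text \<open>Minkowski functional of y - y0 with respect to C centred at y0.\<close>
definition mink_at :: "'a::real_vector set \<Rightarrow> 'a \<Rightarrow> 'a \<Rightarrow> real" where
  "mink_at C y0 y = Inf {l. l \<ge> 0 \<and> y \<in> (\<lambda>x. y0 + l *\<^sub>R (x - y0)) ` C}"

end

theory Submission
  imports Defs
begin

text \<open>
  The cone condition makes \<open>f\<close> affine along every segment from \<open>y0\<close> to the boundary of
  \<open>P = P\<^sub>H K\<close>: writing \<open>g\<close> for the gauge of \<open>P\<close> about \<open>y0\<close>, one has
  \<open>f y = (1 - g y) * \<parallel>f\<parallel>\<^sub>\<infinity>\<close> and \<open>y = y0 + g y (p - y0)\<close> for some \<open>p \<in> P\<close>.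
  Choose \<open>k \<in> K\<close> over \<open>p\<close>. By convexity of \<open>K\<close> the homothetic copy
  \<open>g y k + (1 - g y) (K \<inter> (y0 + H\<^sup>\<bottom>))\<close> lies in the section of \<open>K\<close> over \<open>y\<close>, and by the formula
  for \<open>f\<close> it has the same positive \<open>(n - i)\<close>-volume. A compact convex set contains no proper
  compact subset of the same positive volume, so the two sets coincide.
  If \<open>g y = 1\<close>, the section over \<open>y\<close> is a single point: for any two points \<open>k, k'\<close> of it the
  section over the midpoint of \<open>y0\<close> and \<open>y\<close> is a homothetic copy of the section over \<open>y0\<close> centred
  at \<open>k\<close> and also one centred at \<open>k'\<close>, and a nonempty compact set is invariant under no
  nonzero translation.
\<close>

section \<open>Orthogonal projection and translated subspaces\<close>

lemma proj_onto_in_orthogonal: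
  fixes H :: "'a::euclidean_space set"
  assumes "subspace H"
  shows "proj_onto H x \<in> H \<and> x - proj_onto H x \<in> orthogonal_comp H"
proof -
  obtain a b where "a \<in> H" "b \<in> orthogonal_comp H" "x = a + b"
    using subspace_sum_orthogonal_comp[OF assms] by (metis UNIV_I set_plus_elim)
  then show ?thesis
    unfolding proj_onto_def by (intro someI_ex[of "\<lambda>h. h \<in> H \<and> x - h \<in> orthogonal_comp H"]) auto
qed

lemma proj_onto_unique:
  fixes H :: "'a::euclidean_space set"
  assumes H: "subspace H" and h: "h \<in> H" "x - h \<in> orthogonal_comp H"
  shows "proj_onto H x = h"
proof -
  note proj = proj_onto_in_orthogonal[OF H, of x]
  have "proj_onto H x - h \<in> H"
    using subspace_diff[OF H proj[THEN conjunct1] h(1)] .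
  moreover have "(x - h) - (x - proj_onto H x) \<in> orthogonal_comp H"
    using subspace_diff[OF subspace_orthogonal_comp h(2) proj[THEN conjunct2]] .
  then have "proj_onto H x - h \<in> orthogonal_comp H"
    by simp
  ultimately have "proj_onto H x - h \<in> H \<inter> orthogonal_comp H"
    by blast
  then show ?thesis
    unfolding orthogonal_Int_0[OF H] by simp
qed

lemma linear_proj_onto:
  fixes H :: "'a::euclidean_space set"
  assumes H: "subspace H"
  shows "linear (proj_onto H)"
proof
  fix x y :: 'a and c :: real
  note px = proj_onto_in_orthogonal[OF H, of x] and py = proj_onto_in_orthogonal[OF H, of y]
    and H' = subspace_orthogonal_comp[of H]
  have "(x - proj_onto H x) + (y - proj_onto H y) \<in> orthogonal_comp H"
    using subspace_add[OF H' px[THEN conjunct2] py[THEN conjunct2]] .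
  then have "x + y - (proj_onto H x + proj_onto H y) \<in> orthogonal_comp H"
    by (simp add: algebra_simps)
  with subspace_add[OF H px[THEN conjunct1] py[THEN conjunct1]]
  show "proj_onto H (x + y) = proj_onto H x + proj_onto H y"
    by (rule proj_onto_unique[OF H])
  have "c *\<^sub>R (x - proj_onto H x) \<in> orthogonal_comp H"
    using subspace_scale[OF H' px[THEN conjunct2]] .
  then have "c *\<^sub>R x - c *\<^sub>R proj_onto H x \<in> orthogonal_comp H"
    by (simp add: scaleR_diff_right)
  with subspace_scale[OF H px[THEN conjunct1]]
  show "proj_onto H (c *\<^sub>R x) = c *\<^sub>R proj_onto H x"
    by (rule proj_onto_unique[OF H])
qed

lemma mem_translation_iff_diff_mem: "x \<in> (+) y ` V \<longleftrightarrow> x - (y::'a::ab_group_add) \<in> V"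
proof
  assume "x \<in> (+) y ` V"
  then show "x - y \<in> V" by (auto simp: add.commute[of y])
next
  assume "x - y \<in> V"
  then show "x \<in> (+) y ` V" by (rule rev_image_eqI) simp
qed

lemma mem_translation_orthogonal_comp_iff:
  fixes H :: "'a::euclidean_space set"
  assumes H: "subspace H" and "y \<in> H"
  shows "x \<in> (+) y ` orthogonal_comp H \<longleftrightarrow> proj_onto H x = y"
  unfolding mem_translation_iff_diff_mem
  using proj_onto_unique[OF H assms(2)] proj_onto_in_orthogonal[OF H] by blast

lemma translation_subspace_eq:
  assumes V: "subspace V" and ab: "a - b \<in> V"
  shows "(+) a ` V = (+) b ` V"
proof -
  have "z - a \<in> V \<longleftrightarrow> z - b \<in> V" for z
  proof
    assume "z - a \<in> V"
    then have "(z - a) + (a - b) \<in> V"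
      using subspace_add[OF V _ ab] by blast
    then show "z - b \<in> V" by simp
  next
    assume "z - b \<in> V"
    then have "(z - b) - (a - b) \<in> V"
      using subspace_diff[OF V _ ab] by blast
    then show "z - a \<in> V" by simp
  qed
  then show ?thesis
    unfolding set_eq_iff mem_translation_iff_diff_mem by blast
qed

lemma dim_orthogonal_comp:
  fixes H :: "'a::euclidean_space set"
  assumes "subspace H"
  shows "dim (orthogonal_comp H) = DIM('a) - dim H"
proof -
  have "{y \<in> UNIV. \<forall>x\<in>H. orthogonal x y} = orthogonal_comp H"
    by (auto simp: orthogonal_comp_def orthogonal_def)
  then show ?thesis
    using dim_subspace_orthogonal_to_vectors[OF assms subspace_UNIV subset_UNIV] by simp
qed

section \<open>Orthonormal coordinates on a subspace\<close>

abbreviation onb_lebesgue :: "'a::euclidean_space set \<Rightarrow> ('a \<Rightarrow> real) measure" where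
  "onb_lebesgue V \<equiv> PiM (onb_of V) (\<lambda>_. lborel)"

definition onb_coords :: "'a::euclidean_space set \<Rightarrow> 'a \<Rightarrow> 'a \<Rightarrow> real" where
  "onb_coords V x = restrict (\<lambda>b. x \<bullet> b) (onb_of V)"

definition onb_comb :: "'a::euclidean_space set \<Rightarrow> ('a \<Rightarrow> real) \<Rightarrow> 'a" where
  "onb_comb V u = (\<Sum>b\<in>onb_of V. u b *\<^sub>R b)"

lemma flat_vol_eq_measure: "flat_vol V A = measure (onb_lebesgue V) (onb_coords V ` A)"
  by (simp add: flat_vol_def onb_coords_def)

lemma flat_vol_nonneg: "0 \<le> flat_vol V A"
  by (simp add: flat_vol_def)

lemma onb_of_orthonormal_basis:
  fixes V :: "'a::euclidean_space set"
  assumes V: "subspace V"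
  shows "onb_of V \<subseteq> V" "pairwise orthogonal (onb_of V)" "\<And>b. b \<in> onb_of V \<Longrightarrow> norm b = 1"
    "span (onb_of V) = V" "finite (onb_of V)" "card (onb_of V) = dim V"
proof -
  let ?P = "\<lambda>B. B \<subseteq> V \<and> pairwise orthogonal B \<and> (\<forall>b\<in>B. norm b = 1) \<and> span B = V"
  obtain B where "?P B"
    using orthonormal_basis_subspace[OF V] by metis
  then have P: "?P (onb_of V)"
    unfolding onb_of_def by (rule someI)
  then show "onb_of V \<subseteq> V" "pairwise orthogonal (onb_of V)" "\<And>b. b \<in> onb_of V \<Longrightarrow> norm b = 1"
    "span (onb_of V) = V"
    by auto
  show "finite (onb_of V)"
    using P pairwise_orthogonal_imp_finite by blast
  have "independent (onb_of V)"
    using P pairwise_orthogonal_independent by force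
  then show "card (onb_of V) = dim V"
    using P dim_span_eq_card_independent by metis
qed

lemma inner_onb_of:
  assumes "subspace V" "b \<in> onb_of V" "b' \<in> onb_of V"
  shows "b \<bullet> b' = (if b = b' then 1 else 0)"
  using onb_of_orthonormal_basis(2,3)[OF assms(1)] assms(2,3)
  by (auto simp: pairwise_def orthogonal_def norm_eq_1)

lemma onb_coords_in_space: "onb_coords V x \<in> space (onb_lebesgue V)"
  by (simp add: onb_coords_def space_PiM)

lemma onb_coords_add_scaleR:
  "onb_coords V (z + s *\<^sub>R x) = (\<lambda>b\<in>onb_of V. onb_coords V z b + s * onb_coords V x b)"
  unfolding onb_coords_def by (simp add: inner_add_left fun_eq_iff)

lemma inner_onb_comb:
  assumes "subspace V" "b \<in> onb_of V"
  shows "onb_comb V u \<bullet> b = u b"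
proof -
  have "onb_comb V u \<bullet> b = (\<Sum>b'\<in>onb_of V. if b' = b then u b else 0)"
    unfolding onb_comb_def inner_sum_left using inner_onb_of[OF assms(1) _ assms(2)]
    by (intro sum.cong) auto
  then show ?thesis
    using assms onb_of_orthonormal_basis(5)[OF assms(1)] by simp
qed

lemma onb_comb_in:
  assumes "subspace V"
  shows "onb_comb V u \<in> V"
proof -
  have "onb_comb V u \<in> span (onb_of V)"
    unfolding onb_comb_def by (intro span_sum span_mul span_base)
  then show ?thesis
    using onb_of_orthonormal_basis(4)[OF assms] by simp
qed

lemma onb_comb_onb_coords:
  assumes V: "subspace V" and "w \<in> V"
  shows "onb_comb V (onb_coords V w) = w"
proof -
  have "w \<in> span (onb_of V)"
    using assms onb_of_orthonormal_basis(4)[OF V] by simp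
  then obtain r where r: "w = (\<Sum>b\<in>onb_of V. r b *\<^sub>R b)"
    using span_finite[OF onb_of_orthonormal_basis(5)[OF V]] by auto
  have "w \<bullet> b = r b" if "b \<in> onb_of V" for b
    using inner_onb_comb[OF V that, of r] by (simp add: r onb_comb_def)
  then show ?thesis
    by (simp add: r onb_comb_def onb_coords_def)
qed

lemma inj_on_onb_coords:
  assumes V: "subspace V"
  shows "inj_on (onb_coords V) ((+) y ` V)"
proof
  fix x x' assume "x \<in> (+) y ` V" "x' \<in> (+) y ` V" and eq: "onb_coords V x = onb_coords V x'"
  then obtain v v' where "v \<in> V" "v' \<in> V" "x = y + v" "x' = y + v'"
    by blast
  then have diff: "x - x' \<in> V"
    using subspace_diff[OF V] by simp
  have "x \<bullet> b = x' \<bullet> b" if "b \<in> onb_of V" for b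
    using eq that unfolding onb_coords_def by (metis restrict_apply')
  then have "onb_coords V (x - x') = onb_coords V 0"
    by (auto simp: onb_coords_def inner_diff_left)
  then have "onb_comb V (onb_coords V (x - x')) = onb_comb V (onb_coords V 0)"
    by simp
  then show "x = x'"
    unfolding onb_comb_onb_coords[OF V diff] onb_comb_onb_coords[OF V subspace_0[OF V]] by simp
qed

lemma norm_onb_comb_le:
  assumes "subspace V"
  shows "norm (onb_comb V u) \<le> (\<Sum>b\<in>onb_of V. \<bar>u b\<bar>)"
proof -
  have "norm (onb_comb V u) \<le> (\<Sum>b\<in>onb_of V. norm (u b *\<^sub>R b))"
    unfolding onb_comb_def by (rule norm_sum)
  then show ?thesis
    using onb_of_orthonormal_basis(3)[OF assms] by simp
qed

lemma onb_coords_translate_onb_comb: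
  assumes V: "subspace V" and u: "u \<in> extensional (onb_of V)"
  shows "onb_coords V (y + onb_comb V (\<lambda>b\<in>onb_of V. u b - y \<bullet> b)) = u"
proof
  fix b
  show "onb_coords V (y + onb_comb V (\<lambda>b\<in>onb_of V. u b - y \<bullet> b)) b = u b"
    using u inner_onb_comb[OF V, of b]
    by (cases "b \<in> onb_of V") (simp_all add: onb_coords_def inner_add_left extensional_def)
qed

lemma onb_coords_image_eq_vimage:
  assumes V: "subspace V" and A: "A \<subseteq> (+) y ` V"
  shows "onb_coords V ` A
       = (\<lambda>u. y + onb_comb V (\<lambda>b\<in>onb_of V. u b - y \<bullet> b)) -` A \<inter> space (onb_lebesgue V)"
    (is "_ = ?L -` A \<inter> _")
proof (intro equalityI subsetI)
  fix u assume "u \<in> onb_coords V ` A"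
  then obtain x where x: "x \<in> A" "u = onb_coords V x" by blast
  have "(\<lambda>b\<in>onb_of V. u b - y \<bullet> b) = onb_coords V (x - y)"
    unfolding x onb_coords_def by (simp add: inner_diff_left fun_eq_iff)
  moreover have "x - y \<in> V"
    using x A mem_translation_iff_diff_mem by blast
  ultimately have "?L u = x"
    using onb_comb_onb_coords[OF V] by simp
  then show "u \<in> ?L -` A \<inter> space (onb_lebesgue V)"
    using x onb_coords_in_space by auto
next
  fix u assume u: "u \<in> ?L -` A \<inter> space (onb_lebesgue V)"
  then have "onb_coords V (?L u) = u"
    by (intro onb_coords_translate_onb_comb[OF V]) (simp add: space_PiM PiE_def)
  moreover have "?L u \<in> A"
    using u by simp
  ultimately show "u \<in> onb_coords V ` A"
    by (rule image_eqI[OF sym])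
qed

lemma measurable_component_lborel:
  "i \<in> I \<Longrightarrow> (\<lambda>u. u i) \<in> borel_measurable (PiM I (\<lambda>_. lborel :: real measure))"
  using measurable_component_singleton[of i I "\<lambda>_. lborel :: real measure"]
  by (simp add: measurable_lborel2)

lemma sets_onb_coords_image:
  assumes V: "subspace V" and A: "A \<subseteq> (+) y ` V" "closed A"
  shows "onb_coords V ` A \<in> sets (onb_lebesgue V)"
proof -
  have "(\<lambda>u. y + onb_comb V (\<lambda>b\<in>onb_of V. u b - y \<bullet> b))
      = (\<lambda>u. y + (\<Sum>b\<in>onb_of V. (u b - y \<bullet> b) *\<^sub>R b))"
    unfolding onb_comb_def by (intro ext arg_cong2[where f = "(+)"] refl sum.cong) auto
  moreover have "(\<lambda>u. y + (\<Sum>b\<in>onb_of V. (u b - y \<bullet> b) *\<^sub>R b)) \<in> borel_measurable (onb_lebesgue V)"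
    by (intro borel_measurable_add borel_measurable_const borel_measurable_sum
          borel_measurable_scaleR borel_measurable_diff measurable_component_lborel)
  ultimately have "(\<lambda>u. y + onb_comb V (\<lambda>b\<in>onb_of V. u b - y \<bullet> b)) \<in> borel_measurable (onb_lebesgue V)"
    by simp
  from this borel_closed[OF A(2)] show ?thesis
    unfolding onb_coords_image_eq_vimage[OF V A(1)] by (rule measurable_sets)
qed

lemma emeasure_onb_coords_image_finite:
  assumes V: "subspace V" and "bounded A"
  shows "emeasure (onb_lebesgue V) (onb_coords V ` A) < \<infinity>"
proof -
  interpret product_sigma_finite "\<lambda>_. lborel :: real measure" by standard
  obtain R where R: "\<And>x. x \<in> A \<Longrightarrow> norm x \<le> R"
    using assms(2) bounded_iff by blast
  have "\<bar>x \<bullet> b\<bar> \<le> R" if "x \<in> A" "b \<in> onb_of V" for x b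
    using Cauchy_Schwarz_ineq2[of x b] R[OF that(1)] onb_of_orthonormal_basis(3)[OF V that(2)]
    by simp
  then have "onb_coords V ` A \<subseteq> Pi\<^sub>E (onb_of V) (\<lambda>_. {-R..R})"
    by (force simp: onb_coords_def abs_le_iff)
  then have "emeasure (onb_lebesgue V) (onb_coords V ` A)
      \<le> emeasure (onb_lebesgue V) (Pi\<^sub>E (onb_of V) (\<lambda>_. {-R..R}))"
    by (rule emeasure_mono) (simp add: sets_PiM_I_finite onb_of_orthonormal_basis(5)[OF V])
  also have "\<dots> = (\<Prod>b\<in>onb_of V. emeasure lborel {-R..R})"
    by (rule emeasure_PiM[OF onb_of_orthonormal_basis(5)[OF V]]) simp
  also have "\<dots> < \<infinity>"
    by (simp add: power_less_top_ennreal emeasure_lborel_Icc_eq)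
  finally show ?thesis .
qed

section \<open>Volume in a flat\<close>

lemma PiM_lborel_eq_scale_distr_affine:
  fixes I :: "'i set" and b :: "'i \<Rightarrow> real"
  assumes I: "finite I" and c: "c > 0"
  shows "PiM I (\<lambda>_. lborel) = scale_measure (ennreal (c ^ card I))
           (distr (PiM I (\<lambda>_. lborel)) (PiM I (\<lambda>_. lborel)) (\<lambda>u. \<lambda>i\<in>I. b i + c * u i))"
proof -
  interpret product_sigma_finite "\<lambda>_. lborel :: real measure" by standard
  let ?M = "PiM I (\<lambda>_. lborel :: real measure)"
  let ?L = "\<lambda>u. \<lambda>i\<in>I. b i + c * u i" and ?l = "\<lambda>i x. b i + c * x"
  have L: "?L \<in> measurable ?M ?M"
    by (intro measurable_restrict borel_measurable_add borel_measurable_times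
          borel_measurable_const measurable_component_lborel[unfolded measurable_lborel2]) simp
  have l: "?l i \<in> borel_measurable borel" for i
    by (intro borel_measurable_add borel_measurable_const borel_measurable_times measurable_ident_sets) auto
  show ?thesis
  proof (rule PiM_eqI[symmetric, OF I])
    fix A :: "'i \<Rightarrow> real set" assume A: "\<And>i. i \<in> I \<Longrightarrow> A i \<in> sets lborel"
    have A': "?l i -` A i \<in> sets lborel" if "i \<in> I" for i
      using measurable_sets[OF l A[OF that, unfolded sets_lborel]] by simp
    have "?L -` Pi\<^sub>E I A \<inter> space ?M = Pi\<^sub>E I (\<lambda>i. ?l i -` A i)"
      by (auto simp: space_PiM PiE_iff extensional_def)
    then have "emeasure (distr ?M ?M ?L) (Pi\<^sub>E I A) = (\<Prod>i\<in>I. emeasure lborel (?l i -` A i))"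
      using A A' L by (simp add: emeasure_distr sets_PiM_I_finite I emeasure_PiM)
    moreover have "emeasure lborel (A i) = ennreal c * emeasure lborel (?l i -` A i)" if "i \<in> I" for i
    proof -
      have "emeasure lborel (A i) = emeasure (density (distr lborel borel (?l i)) (\<lambda>_. ennreal c)) (A i)"
        using lborel_real_affine[of c "b i"] c by simp
      also have "\<dots> = ennreal c * emeasure lborel (?l i -` A i)"
        using A[OF that] by (simp add: emeasure_density_const emeasure_distr)
      finally show ?thesis .
    qed
    ultimately show "emeasure (scale_measure (ennreal (c ^ card I)) (distr ?M ?M ?L)) (Pi\<^sub>E I A)
        = (\<Prod>i\<in>I. emeasure lborel (A i))"
      using c by (simp add: prod.distrib ennreal_power)
  qed simp
qed

lemma emeasure_PiM_lborel_affine_image: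
  fixes I :: "'i set" and a :: "'i \<Rightarrow> real"
  assumes I: "finite I" and s: "s > 0" and T: "T \<in> sets (PiM I (\<lambda>_. lborel))"
  shows "emeasure (PiM I (\<lambda>_. lborel)) ((\<lambda>u. \<lambda>i\<in>I. a i + s * u i) ` T)
       = ennreal (s ^ card I) * emeasure (PiM I (\<lambda>_. lborel)) T"
proof -
  let ?M = "PiM I (\<lambda>_. lborel :: real measure)"
  let ?L = "\<lambda>u. \<lambda>i\<in>I. a i + s * u i" and ?R = "\<lambda>u. \<lambda>i\<in>I. - a i / s + (1 / s) * u i"
  have T_space: "T \<subseteq> space ?M"
    using T sets.sets_into_space by blast
  have R: "?R \<in> measurable ?M ?M"
    by (intro measurable_restrict borel_measurable_add borel_measurable_times
          borel_measurable_const measurable_component_lborel[unfolded measurable_lborel2]) simp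
  have LR: "?L ` T = ?R -` T \<inter> space ?M"
  proof (intro equalityI subsetI)
    fix v assume "v \<in> ?L ` T"
    then obtain u where u: "u \<in> T" "v = ?L u" by blast
    then have "?R v = u"
      using T_space s by (auto simp: space_PiM PiE_iff extensional_def fun_eq_iff field_simps)
    then show "v \<in> ?R -` T \<inter> space ?M"
      using u by (auto simp: space_PiM)
  next
    fix v assume v: "v \<in> ?R -` T \<inter> space ?M"
    then have "v = ?L (?R v)"
      using s by (auto simp: space_PiM PiE_iff extensional_def fun_eq_iff field_simps)
    then show "v \<in> ?L ` T"
      using v by blast
  qed
  have scale: "?M = scale_measure (ennreal ((1 / s) ^ card I)) (distr ?M ?M ?R)"
    by (rule PiM_lborel_eq_scale_distr_affine[OF I]) (use s in simp)
  have "emeasure ?M T = emeasure (scale_measure (ennreal ((1 / s) ^ card I)) (distr ?M ?M ?R)) T"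
    by (subst scale[symmetric]) (rule refl)
  also have "\<dots> = ennreal ((1 / s) ^ card I) * emeasure (distr ?M ?M ?R) T"
    by simp
  also have "\<dots> = ennreal ((1 / s) ^ card I) * emeasure ?M (?L ` T)"
    using R T by (simp add: emeasure_distr LR)
  finally have "ennreal (s ^ card I) * emeasure ?M T
      = ennreal (s ^ card I * (1 / s) ^ card I) * emeasure ?M (?L ` T)"
    using s by (simp add: ennreal_mult mult.assoc)
  then show ?thesis
    using s by (simp add: power_mult_distrib[symmetric])
qed

lemma flat_vol_homothety:
  fixes A V :: "'a::euclidean_space set"
  assumes V: "subspace V" and A: "A \<subseteq> (+) y ` V" "closed A" and s: "s > 0"
  shows "flat_vol V ((\<lambda>x. z + s *\<^sub>R x) ` A) = s ^ dim V * flat_vol V A"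
proof -
  let ?L = "\<lambda>u. \<lambda>b\<in>onb_of V. onb_coords V z b + s * u b"
  have "onb_coords V ` (\<lambda>x. z + s *\<^sub>R x) ` A = ?L ` onb_coords V ` A"
    by (simp add: image_image onb_coords_add_scaleR)
  moreover have "emeasure (onb_lebesgue V) (?L ` onb_coords V ` A)
      = ennreal (s ^ dim V) * emeasure (onb_lebesgue V) (onb_coords V ` A)"
    using emeasure_PiM_lborel_affine_image[OF onb_of_orthonormal_basis(5)[OF V] s
        sets_onb_coords_image[OF V A]]
    by (simp add: onb_of_orthonormal_basis(6)[OF V])
  ultimately show ?thesis
    unfolding flat_vol_eq_measure measure_def using s by (simp add: enn2real_mult)
qed

lemma flat_vol_pos_if_ball:
  fixes A V :: "'a::euclidean_space set"
  assumes V: "subspace V" and A: "A \<subseteq> (+) x ` V" "compact A"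
    and r: "r > 0" and ball: "ball x r \<inter> (+) x ` V \<subseteq> A"
  shows "0 < flat_vol V A"
proof -
  interpret product_sigma_finite "\<lambda>_. lborel :: real measure" by standard
  note B = onb_of_orthonormal_basis[OF V]
  define \<delta> where "\<delta> = r / (real (dim V) + 1)"
  have \<delta>: "\<delta> > 0" "real (dim V) * \<delta> < r"
    using r by (auto simp: \<delta>_def field_simps)
  let ?X = "Pi\<^sub>E (onb_of V) (\<lambda>b. {x \<bullet> b - \<delta> <..< x \<bullet> b + \<delta>})"
  have "?X \<subseteq> onb_coords V ` A"
  proof
    fix u assume u: "u \<in> ?X"
    let ?w = "\<lambda>b\<in>onb_of V. u b - x \<bullet> b"
    have "norm (onb_comb V ?w) \<le> (\<Sum>b\<in>onb_of V. \<bar>?w b\<bar>)"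
      by (rule norm_onb_comb_le[OF V])
    also have "\<dots> \<le> (\<Sum>b\<in>onb_of V. \<delta>)"
      using u by (intro sum_mono) (auto simp: PiE_iff abs_le_iff)
    finally have "x + onb_comb V ?w \<in> ball x r"
      using \<delta> B(6) by (simp add: dist_norm)
    moreover have "x + onb_comb V ?w \<in> (+) x ` V"
      using onb_comb_in[OF V] by simp
    moreover have "onb_coords V (x + onb_comb V ?w) = u"
      using u by (intro onb_coords_translate_onb_comb[OF V]) (simp add: PiE_def)
    ultimately show "u \<in> onb_coords V ` A"
      using ball by (metis IntI image_eqI subsetD)
  qed
  then have X_le: "emeasure (onb_lebesgue V) ?X \<le> emeasure (onb_lebesgue V) (onb_coords V ` A)"
    by (rule emeasure_mono) (rule sets_onb_coords_image[OF V A(1) compact_imp_closed[OF A(2)]])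
  have "0 < ennreal ((2 * \<delta>) ^ dim V)"
    using \<delta> by simp
  also have "\<dots> = emeasure (onb_lebesgue V) ?X"
    using \<delta> by (simp add: emeasure_PiM B(5) B(6)[symmetric] ennreal_power)
  also note X_le
  finally have "0 < emeasure (onb_lebesgue V) (onb_coords V ` A)" .
  moreover have "emeasure (onb_lebesgue V) (onb_coords V ` A) < \<infinity>"
    by (rule emeasure_onb_coords_image_finite[OF V compact_imp_bounded[OF A(2)]])
  ultimately show ?thesis
    unfolding flat_vol_eq_measure measure_def by (simp add: enn2real_positive_iff)
qed

lemma flat_vol_add_le:
  fixes A C D V :: "'a::euclidean_space set"
  assumes V: "subspace V" and ADC: "A \<union> D \<subseteq> C" "A \<inter> D = {}"
    and cpt: "compact A" "compact D" "compact C" and C: "C \<subseteq> (+) y ` V"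
  shows "flat_vol V A + flat_vol V D \<le> flat_vol V C"
proof -
  let ?M = "onb_lebesgue V" and ?c = "onb_coords V"
  have flat: "A \<subseteq> (+) y ` V" "D \<subseteq> (+) y ` V"
    using ADC C by auto
  have sets: "?c ` A \<in> sets ?M" "?c ` D \<in> sets ?M" "?c ` C \<in> sets ?M"
    using sets_onb_coords_image[OF V] flat C cpt compact_imp_closed by metis+
  have fin: "emeasure ?M (?c ` A) \<noteq> \<infinity>" "emeasure ?M (?c ` D) \<noteq> \<infinity>"
    using emeasure_onb_coords_image_finite[OF V] cpt compact_imp_bounded by (metis less_irrefl)+
  have C_fin: "?c ` C \<in> fmeasurable ?M"
    using sets(3) emeasure_onb_coords_image_finite[OF V compact_imp_bounded[OF cpt(3)]]
    by (rule fmeasurableI)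
  have "?c ` A \<inter> ?c ` D = ?c ` (A \<inter> D)"
    using inj_on_image_Int[OF inj_on_onb_coords[OF V] flat] by simp
  then have "measure ?M (?c ` A \<union> ?c ` D) = flat_vol V A + flat_vol V D"
    unfolding flat_vol_eq_measure using ADC(2) by (intro measure_Union fin sets) simp
  moreover have "measure ?M (?c ` A \<union> ?c ` D) \<le> measure ?M (?c ` C)"
    using ADC(1) sets C_fin by (intro measure_mono_fmeasurable) auto
  ultimately show ?thesis
    by (simp add: flat_vol_eq_measure)
qed

lemma homothetic_shrink_avoids_closed:
  fixes A C :: "'a::real_normed_vector set"
  assumes "bounded C" "closed A" "b \<notin> A"
  obtains \<epsilon> where "0 < \<epsilon>" "\<epsilon> < 1" "(\<lambda>x. (1 - \<epsilon>) *\<^sub>R b + \<epsilon> *\<^sub>R x) ` C \<inter> A = {}"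
proof -
  obtain \<delta> where \<delta>: "\<delta> > 0" "ball b \<delta> \<subseteq> - A"
    using assms(2,3) open_contains_ball[of "- A"] by (auto simp: open_Compl)
  obtain R where R: "R > 0" "\<And>x. x \<in> C \<Longrightarrow> norm x \<le> R"
    using assms(1) bounded_pos by blast
  have S: "0 < R + norm b"
    using R(1) by (simp add: add_pos_nonneg)
  define \<epsilon> where "\<epsilon> = min (1 / 2) (\<delta> / (2 * (R + norm b)))"
  have "\<epsilon> * (R + norm b) \<le> \<delta> / (2 * (R + norm b)) * (R + norm b)"
    using S by (intro mult_right_mono) (auto simp: \<epsilon>_def)
  also have "\<dots> = \<delta> / 2"
    using S by (simp add: field_simps)
  also have "\<dots> < \<delta>"
    using \<delta>(1) by simp
  finally have \<epsilon>: "\<epsilon> * (R + norm b) < \<delta>" "0 < \<epsilon>" "\<epsilon> < 1"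
    using S \<delta>(1) by (simp_all add: \<epsilon>_def)
  have "(1 - \<epsilon>) *\<^sub>R b + \<epsilon> *\<^sub>R x \<in> ball b \<delta>" if "x \<in> C" for x
  proof -
    have "norm (x - b) \<le> R + norm b"
      using norm_triangle_ineq4[of x b] R(2)[OF that] by simp
    then have "\<epsilon> * norm (x - b) < \<delta>"
      using \<epsilon> mult_left_mono[of "norm (x - b)" "R + norm b" \<epsilon>] by linarith
    moreover have "b - ((1 - \<epsilon>) *\<^sub>R b + \<epsilon> *\<^sub>R x) = \<epsilon> *\<^sub>R (b - x)"
      by (simp add: algebra_simps)
    ultimately show ?thesis
      using \<epsilon>(2) by (simp add: dist_norm norm_minus_commute)
  qed
  with \<delta>(2) \<epsilon> that show ?thesis
    by blast
qed

lemma flat_vol_subset_eq: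
  fixes A C V :: "'a::euclidean_space set"
  assumes V: "subspace V" and AC: "A \<subseteq> C" and cpt: "compact A" "compact C"
    and C: "convex C" "C \<subseteq> (+) y ` V"
    and vol: "flat_vol V C \<le> flat_vol V A" "0 < flat_vol V A"
  shows "A = C"
proof (rule ccontr)
  assume "A \<noteq> C"
  then obtain b where b: "b \<in> C" "b \<notin> A"
    using AC by blast
  then obtain \<epsilon> where \<epsilon>: "0 < \<epsilon>" "\<epsilon> < 1"
    and disj: "(\<lambda>x. (1 - \<epsilon>) *\<^sub>R b + \<epsilon> *\<^sub>R x) ` C \<inter> A = {}"
    using homothetic_shrink_avoids_closed compact_imp_bounded compact_imp_closed cpt by metis
  \<comment> \<open>Shrinking \<open>C\<close> towards \<open>b\<close> gives a subset of \<open>C\<close> of positive volume that misses \<open>A\<close>.\<close>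
  define D where "D = (\<lambda>x. (1 - \<epsilon>) *\<^sub>R b + \<epsilon> *\<^sub>R x) ` C"
  have "D \<subseteq> C"
    unfolding D_def using \<epsilon> b(1) C(1) by (auto intro: convexD)
  moreover have "compact D"
    unfolding D_def by (intro compact_continuous_image[OF _ cpt(2)] continuous_intros)
  ultimately have "flat_vol V A + flat_vol V D \<le> flat_vol V C"
    using AC disj cpt C(2) by (intro flat_vol_add_le[OF V]) (auto simp: D_def)
  moreover have "flat_vol V D = \<epsilon> ^ dim V * flat_vol V C"
    unfolding D_def by (rule flat_vol_homothety[OF V C(2) compact_imp_closed[OF cpt(2)] \<epsilon>(1)])
  ultimately show False
    using vol \<epsilon>(1) flat_vol_nonneg[of V D] by (smt (verit) zero_less_power mult_pos_pos)
qed

lemma compact_Int_translation_subspace: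
  fixes K V :: "'a::euclidean_space set"
  assumes "compact K" "subspace V"
  shows "compact (K \<inter> (+) y ` V)"
  using compact_Int_closed[OF assms(1) closed_translation[OF closed_subspace[OF assms(2)]]] .

lemma homothetic_images_eq_imp_eq:
  fixes S :: "'a::real_inner set"
  assumes S: "compact S" "S \<noteq> {}" and "c \<noteq> 0"
    and eq: "(\<lambda>x. a + c *\<^sub>R x) ` S = (\<lambda>x. b + c *\<^sub>R x) ` S"
  shows "a = b"
proof -
  define v where "v = (1 / c) *\<^sub>R (a - b)"
  have step: "x + v \<in> S" if "x \<in> S" for x
  proof -
    have "a + c *\<^sub>R x \<in> (\<lambda>x. b + c *\<^sub>R x) ` S"
      unfolding eq[symmetric] using that by blast
    then obtain x' where "x' \<in> S" "a + c *\<^sub>R x = b + c *\<^sub>R x'"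
      by auto
    then have "c *\<^sub>R x' = c *\<^sub>R (x + v)"
      using \<open>c \<noteq> 0\<close> by (simp add: v_def algebra_simps)
    then have "x' = x + v"
      using \<open>c \<noteq> 0\<close> by simp
    with \<open>x' \<in> S\<close> show ?thesis by simp
  qed
  obtain x where x: "x \<in> S" "\<And>y. y \<in> S \<Longrightarrow> y \<bullet> v \<le> x \<bullet> v"
  proof -
    have "continuous_on S (\<lambda>y. y \<bullet> v)"
      by (intro continuous_intros)
    then show ?thesis
      using continuous_attains_sup[OF S] that by blast
  qed
  have "(x + v) \<bullet> v \<le> x \<bullet> v"
    using x step by blast
  then have "v \<bullet> v \<le> 0"
    by (simp add: inner_add_left)
  then have "v = 0"
    by (metis antisym inner_ge_zero inner_eq_zero_iff)
  then show ?thesis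
    using \<open>c \<noteq> 0\<close> by (simp add: v_def)
qed

section \<open>The gauge and the cone condition\<close>

lemma mink_at_le:
  assumes "0 \<le> l" "x \<in> C" "y = y0 + l *\<^sub>R (x - y0)"
  shows "mink_at C y0 y \<le> l"
  unfolding mink_at_def using assms by (intro cInf_lower bdd_belowI[of _ 0]) auto

lemma mink_at_ge:
  assumes "0 \<le> l0" "x0 \<in> C" "y = y0 + l0 *\<^sub>R (x0 - y0)"
    and "\<And>l x. 0 \<le> l \<Longrightarrow> x \<in> C \<Longrightarrow> y = y0 + l *\<^sub>R (x - y0) \<Longrightarrow> c \<le> l"
  shows "c \<le> mink_at C y0 y"
  unfolding mink_at_def using assms by (intro cInf_greatest) auto

lemma mink_at_bounds:
  assumes "y \<in> C"
  shows "0 \<le> mink_at C y0 y" "mink_at C y0 y \<le> 1"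
  using mink_at_ge[of 1 y C y y0 0] mink_at_le[of 1 y C y y0] assms by simp_all

lemma mink_at_centre: "y0 \<in> C \<Longrightarrow> mink_at C y0 y0 = 0"
  using mink_at_le[of 0 y0 C y0 y0] mink_at_bounds(1)[of y0 C y0] by simp

lemma mink_at_homogeneous:
  fixes C :: "'a::real_vector set"
  assumes y: "y \<in> C" and t: "0 < t"
  shows "mink_at C y0 (y0 + t *\<^sub>R (y - y0)) = t * mink_at C y0 y"
proof (rule antisym)
  have "mink_at C y0 (y0 + t *\<^sub>R (y - y0)) / t \<le> mink_at C y0 y"
  proof (rule mink_at_ge[of 1 y])
    fix l x assume "0 \<le> l" "x \<in> C" "y = y0 + l *\<^sub>R (x - y0)"
    then have "mink_at C y0 (y0 + t *\<^sub>R (y - y0)) \<le> t * l"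
      using t by (intro mink_at_le[of "t * l" x]) simp_all
    then show "mink_at C y0 (y0 + t *\<^sub>R (y - y0)) / t \<le> l"
      using t by (simp add: divide_le_eq mult.commute)
  qed (use y in simp_all)
  then show "mink_at C y0 (y0 + t *\<^sub>R (y - y0)) \<le> t * mink_at C y0 y"
    using t by (simp add: divide_le_eq mult.commute)
  show "t * mink_at C y0 y \<le> mink_at C y0 (y0 + t *\<^sub>R (y - y0))"
  proof (rule mink_at_ge[of t y])
    fix l x assume "0 \<le> l" "x \<in> C" "y0 + t *\<^sub>R (y - y0) = y0 + l *\<^sub>R (x - y0)"
    then have "t *\<^sub>R (y - y0) = l *\<^sub>R (x - y0)"
      by simp
    then have "(1 / t) *\<^sub>R (t *\<^sub>R (y - y0)) = (l / t) *\<^sub>R (x - y0)"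
      by simp
    then have "y = y0 + (l / t) *\<^sub>R (x - y0)"
      using t by (simp add: algebra_simps)
    then have "mink_at C y0 y \<le> l / t"
      using t \<open>0 \<le> l\<close> \<open>x \<in> C\<close> by (intro mink_at_le[of "l / t" x]) simp_all
    then show "t * mink_at C y0 y \<le> l"
      using t by (simp add: le_divide_eq mult.commute)
  qed (use y t in simp_all)
qed

lemma convex_hull_cone:
  fixes P :: "'a::real_vector set" and M :: real
  assumes "convex P" "P \<noteq> {}"
  shows "convex hull ((P \<times> {0}) \<union> {(y0, M)})
       = {((1 - u) *\<^sub>R y0 + u *\<^sub>R p, (1 - u) * M) | p u. p \<in> P \<and> 0 \<le> u \<and> u \<le> 1}"
proof -
  have "convex hull (P \<times> {0 :: real}) = P \<times> {0}"
    using convex_Times[OF assms(1) convex_singleton] by (simp add: convex_hull_eq)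
  then have "convex hull (insert (y0, M) (P \<times> {0}))
      = {(1 - u) *\<^sub>R (y0, M) + u *\<^sub>R x | x u. 0 \<le> u \<and> u \<le> 1 \<and> x \<in> P \<times> {0}}"
    using assms(2) by (simp add: convex_hull_insert_alt)
  then show ?thesis
    by auto
qed

lemma cone_hypograph_ge:
  fixes P :: "'a::real_vector set" and f :: "'a \<Rightarrow> real"
  assumes P: "convex P"
    and cone: "{(y, t). y \<in> P \<and> 0 \<le> t \<and> t \<le> f y} = convex hull ((P \<times> {0}) \<union> {(y0, M)})"
    and p: "p \<in> P" and u: "0 \<le> u" "u \<le> 1"
  shows "(1 - u) *\<^sub>R y0 + u *\<^sub>R p \<in> P" "(1 - u) * M \<le> f ((1 - u) *\<^sub>R y0 + u *\<^sub>R p)"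
proof -
  have "((1 - u) *\<^sub>R y0 + u *\<^sub>R p, (1 - u) * M) \<in> convex hull ((P \<times> {0}) \<union> {(y0, M)})"
    using p u by (subst convex_hull_cone[OF P]) blast+
  then show "(1 - u) *\<^sub>R y0 + u *\<^sub>R p \<in> P" "(1 - u) * M \<le> f ((1 - u) *\<^sub>R y0 + u *\<^sub>R p)"
    unfolding cone[symmetric] by simp_all
qed

lemma cone_hypograph_elim:
  fixes P :: "'a::real_vector set" and f :: "'a \<Rightarrow> real"
  assumes P: "convex P"
    and cone: "{(y, t). y \<in> P \<and> 0 \<le> t \<and> t \<le> f y} = convex hull ((P \<times> {0}) \<union> {(y0, M)})"
    and y: "y \<in> P"
  obtains p u where "p \<in> P" "0 \<le> u" "u \<le> 1" "y = (1 - u) *\<^sub>R y0 + u *\<^sub>R p" "f y = (1 - u) * M"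
proof -
  have "(y, 0) \<in> convex hull ((P \<times> {0}) \<union> {(y0, M)})"
    using y hull_subset by fastforce
  then have "0 \<le> f y"
    unfolding cone[symmetric] by simp
  then have "(y, f y) \<in> convex hull ((P \<times> {0}) \<union> {(y0, M)})"
    unfolding cone[symmetric] using y by simp
  then show ?thesis
    using y that by (subst (asm) convex_hull_cone[OF P]) blast+
qed

lemma cone_hypograph_le:
  fixes P :: "'a::real_vector set" and f :: "'a \<Rightarrow> real"
  assumes P: "convex P"
    and cone: "{(y, t). y \<in> P \<and> 0 \<le> t \<and> t \<le> f y} = convex hull ((P \<times> {0}) \<union> {(y0, M)})"
    and y: "y \<in> P"
  shows "f y \<le> M"
proof -
  have "(y0, M) \<in> convex hull ((P \<times> {0}) \<union> {(y0, M)})"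
    by (simp add: hull_inc)
  then have "0 \<le> M"
    unfolding cone[symmetric] by simp
  obtain u where "0 \<le> u" "f y = M - u * M"
    using cone_hypograph_elim[OF P cone y] by (metis left_diff_distrib mult_1)
  moreover have "0 \<le> u * M"
    using \<open>0 \<le> u\<close> \<open>0 \<le> M\<close> by simp
  ultimately show ?thesis
    by linarith
qed

lemma mink_at_cone_hypograph:
  fixes P :: "'a::real_vector set" and f :: "'a \<Rightarrow> real"
  assumes P: "convex P" and M: "0 < M"
    and cone: "{(y, t). y \<in> P \<and> 0 \<le> t \<and> t \<le> f y} = convex hull ((P \<times> {0}) \<union> {(y0, M)})"
    and y: "y \<in> P"
  shows "f y = (1 - mink_at P y0 y) * M" "\<exists>p\<in>P. y = y0 + mink_at P y0 y *\<^sub>R (p - y0)"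
proof -
  obtain p u where pu: "p \<in> P" "0 \<le> u" "u \<le> 1" "y = (1 - u) *\<^sub>R y0 + u *\<^sub>R p" "f y = (1 - u) * M"
    using cone_hypograph_elim[OF P cone y] by metis
  then have y_eq: "y = y0 + u *\<^sub>R (p - y0)"
    by (simp add: algebra_simps)
  have "mink_at P y0 y = u"
  proof (rule antisym)
    show "mink_at P y0 y \<le> u"
      using pu(2,1) y_eq by (rule mink_at_le)
    show "u \<le> mink_at P y0 y"
    proof (rule mink_at_ge[OF pu(2,1) y_eq])
      fix l x assume l: "0 \<le> l" "x \<in> P" "y = y0 + l *\<^sub>R (x - y0)"
      show "u \<le> l"
      proof (cases "l \<le> 1")
        case True
        have "(1 - l) *\<^sub>R y0 + l *\<^sub>R x = y"
          using l(3) by (simp add: algebra_simps)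
        then have "(1 - l) * M \<le> (1 - u) * M"
          using cone_hypograph_ge(2)[OF P cone l(2,1) True] pu(5) by simp
        then show ?thesis
          using M by simp
      qed (use pu(3) in simp)
    qed
  qed
  then show "f y = (1 - mink_at P y0 y) * M" "\<exists>p\<in>P. y = y0 + mink_at P y0 y *\<^sub>R (p - y0)"
    using pu(1,5) y_eq by auto
qed

section \<open>Sections of a convex body\<close>

lemma section_flat_vol_pos:
  fixes K H :: "'a::euclidean_space set"
  assumes K: "compact K" "interior K \<noteq> {}" and H: "subspace H"
  shows "\<exists>y\<in>proj_onto H ` K. 0 < flat_vol (orthogonal_comp H) (K \<inter> (+) y ` orthogonal_comp H)"
proof -
  obtain x where "x \<in> interior K"
    using K(2) by blast
  then obtain r where r: "0 < r" "ball x r \<subseteq> K"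
    using mem_interior by blast
  have "0 < flat_vol (orthogonal_comp H) (K \<inter> (+) x ` orthogonal_comp H)"
    using r by (intro flat_vol_pos_if_ball[OF subspace_orthogonal_comp _ _ r(1)]
        compact_Int_translation_subspace[OF K(1) subspace_orthogonal_comp]) auto
  moreover have "(+) x ` orthogonal_comp H = (+) (proj_onto H x) ` orthogonal_comp H"
    using proj_onto_in_orthogonal[OF H] by (intro translation_subspace_eq subspace_orthogonal_comp) blast
  moreover have "x \<in> K"
    using r by auto
  ultimately show ?thesis
    by auto
qed

lemma section_homothetic:
  fixes K H :: "'a::euclidean_space set"
  defines "V \<equiv> orthogonal_comp H"
  assumes K: "compact K" "convex K" and H: "subspace H" "y0 \<in> H"
    and k: "k \<in> K" and u: "0 \<le> u" "u < 1" and y: "y = y0 + u *\<^sub>R (proj_onto H k - y0)"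
    and vol: "flat_vol V (K \<inter> (+) y ` V) \<le> (1 - u) ^ dim V * flat_vol V (K \<inter> (+) y0 ` V)"
    and pos: "0 < flat_vol V (K \<inter> (+) y0 ` V)"
  shows "K \<inter> (+) y ` V = (\<lambda>x. u *\<^sub>R k + (1 - u) *\<^sub>R x) ` (K \<inter> (+) y0 ` V)"
proof -
  let ?T = "(\<lambda>x. u *\<^sub>R k + (1 - u) *\<^sub>R x) ` (K \<inter> (+) y0 ` V)"
  have V: "subspace V"
    unfolding V_def by (rule subspace_orthogonal_comp)
  note lin = linear_proj_onto[OF H(1)] and sec = mem_translation_orthogonal_comp_iff[OF H(1)]
  have "proj_onto H k - y0 \<in> H"
    using subspace_diff[OF H(1) proj_onto_in_orthogonal[OF H(1), THEN conjunct1] H(2)] .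
  then have yH: "y \<in> H"
    unfolding y using subspace_add[OF H(1) H(2) subspace_scale[OF H(1)]] by blast
  have "?T \<subseteq> K \<inter> (+) y ` V"
  proof
    fix z assume "z \<in> ?T"
    then obtain x where x: "x \<in> K" "x \<in> (+) y0 ` V" "z = u *\<^sub>R k + (1 - u) *\<^sub>R x"
      by blast
    then have "proj_onto H x = y0"
      using sec[OF H(2)] unfolding V_def by blast
    have "z \<in> K"
      using convexD[OF K(2) k x(1), of u "1 - u"] u x(3) by simp
    moreover have "proj_onto H z = u *\<^sub>R proj_onto H k + (1 - u) *\<^sub>R proj_onto H x"
      unfolding x(3) by (simp only: linear_add[OF lin] linear_scale[OF lin])
    then have "proj_onto H z = y"
      unfolding y \<open>proj_onto H x = y0\<close> by (simp add: algebra_simps)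
    ultimately show "z \<in> K \<inter> (+) y ` V"
      using sec[OF yH] unfolding V_def by blast
  qed
  moreover have "flat_vol V ?T = (1 - u) ^ dim V * flat_vol V (K \<inter> (+) y0 ` V)"
    using u by (intro flat_vol_homothety[OF V _ compact_imp_closed]
        compact_Int_translation_subspace[OF K(1) V]) auto
  moreover have "compact ?T"
    by (intro compact_continuous_image compact_Int_translation_subspace[OF K(1) V] continuous_intros)
  ultimately show ?thesis
    using vol pos u
    by (intro flat_vol_subset_eq[OF V, symmetric] compact_Int_translation_subspace[OF K(1) V]
        convex_Int[OF K(2) convex_translation[OF subspace_imp_convex[OF V]]]) auto
qed

lemma section_singleton:
  fixes K H :: "'a::euclidean_space set"
  defines "V \<equiv> orthogonal_comp H"
  assumes K: "compact K" "convex K" and H: "subspace H" "y0 \<in> H"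
    and k: "k \<in> K" "proj_onto H k = p"
    and vol: "flat_vol V (K \<inter> (+) (y0 + (1 / 2) *\<^sub>R (p - y0)) ` V)
              \<le> (1 / 2) ^ dim V * flat_vol V (K \<inter> (+) y0 ` V)"
    and pos: "0 < flat_vol V (K \<inter> (+) y0 ` V)"
  shows "K \<inter> (+) p ` V = {k}"
proof -
  have "p \<in> H"
    using k(2) proj_onto_in_orthogonal[OF H(1)] by blast
  then have mem: "x \<in> K \<inter> (+) p ` V \<longleftrightarrow> x \<in> K \<and> proj_onto H x = p" for x
    using mem_translation_orthogonal_comp_iff[OF H(1)] unfolding V_def by blast
  have half: "K \<inter> (+) (y0 + (1 / 2) *\<^sub>R (p - y0)) ` V
      = (\<lambda>x. (1 / 2) *\<^sub>R k' + (1 - 1 / 2) *\<^sub>R x) ` (K \<inter> (+) y0 ` V)"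
    if "k' \<in> K \<inter> (+) p ` V" for k'
    using section_homothetic[OF K H, of k' "1 / 2"] that mem vol pos unfolding V_def by simp
  have k_mem: "k \<in> K \<inter> (+) p ` V"
    using k mem by blast
  have ne: "K \<inter> (+) y0 ` V \<noteq> {}"
    using pos by (auto simp: flat_vol_def)
  have cpt: "compact (K \<inter> (+) y0 ` V)"
    unfolding V_def by (rule compact_Int_translation_subspace[OF K(1) subspace_orthogonal_comp])
  have "k' = k" if "k' \<in> K \<inter> (+) p ` V" for k'
  proof -
    have eq: "(\<lambda>x. (1 / 2) *\<^sub>R k' + (1 - 1 / 2) *\<^sub>R x) ` (K \<inter> (+) y0 ` V)
        = (\<lambda>x. (1 / 2) *\<^sub>R k + (1 - 1 / 2) *\<^sub>R x) ` (K \<inter> (+) y0 ` V)"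
      using half[OF that] half[OF k_mem] by metis
    show ?thesis
      using homothetic_images_eq_imp_eq[OF cpt ne _ eq] by simp
  qed
  then show ?thesis
    using k_mem by blast
qed

lemma sections_homothetic:
  fixes K H :: "'a::euclidean_space set"
  defines "V \<equiv> orthogonal_comp H" and "P \<equiv> proj_onto H ` K"
  assumes K: "compact K" "convex K" and H: "subspace H" and y0: "y0 \<in> P"
    and pos: "0 < flat_vol V (K \<inter> (+) y0 ` V)"
    and vol: "\<And>y. y \<in> P \<Longrightarrow>
      flat_vol V (K \<inter> (+) y ` V) \<le> (1 - mink_at P y0 y) ^ dim V * flat_vol V (K \<inter> (+) y0 ` V)"
    and attained: "\<And>y. y \<in> P \<Longrightarrow> \<exists>p\<in>P. y = y0 + mink_at P y0 y *\<^sub>R (p - y0)"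
    and y: "y \<in> P"
  shows "\<exists>z. K \<inter> (+) y ` V = (\<lambda>x. z + (1 - mink_at P y0 y) *\<^sub>R x) ` (K \<inter> (+) y0 ` V)"
proof -
  let ?g = "mink_at P y0"
  have y0H: "y0 \<in> H"
    using y0 proj_onto_in_orthogonal[OF H] by (auto simp: P_def)
  obtain p where p: "p \<in> P" "y = y0 + ?g y *\<^sub>R (p - y0)"
    using attained[OF y] by blast
  then obtain k where k: "k \<in> K" "proj_onto H k = p"
    by (auto simp: P_def)
  consider "?g y < 1" | "?g y = 1"
    using mink_at_bounds(2)[OF y, of y0] by linarith
  then show ?thesis
  proof cases
    case 1
    then show ?thesis
      using section_homothetic[OF K H(1) y0H k(1) mink_at_bounds(1)[OF y, of y0] 1] vol[OF y] pos p(2) k(2)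
      unfolding V_def by blast
  next
    case 2
    let ?y' = "y0 + (1 / 2) *\<^sub>R (p - y0)"
    have "y = p"
      using p(2) 2 by simp
    have "(1 / 2) *\<^sub>R y0 + (1 / 2) *\<^sub>R p = ?y'"
      by (simp add: algebra_simps flip: scaleR_add_left)
    then have y'P: "?y' \<in> P"
      using convexD[OF convex_linear_image[OF linear_proj_onto[OF H] K(2)], of y0 p "1 / 2" "1 / 2"]
        y0 p(1) unfolding P_def by simp
    have g_half: "?g ?y' = 1 / 2"
      using mink_at_homogeneous[OF p(1), of "1 / 2"] 2 \<open>y = p\<close> by simp
    have "flat_vol V (K \<inter> (+) ?y' ` V) \<le> (1 / 2) ^ dim V * flat_vol V (K \<inter> (+) y0 ` V)"
      using vol[OF y'P] unfolding g_half by simp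
    then have "K \<inter> (+) y ` V = {k}"
      using section_singleton[OF K H(1) y0H k] pos \<open>y = p\<close> unfolding V_def by blast
    moreover have "K \<inter> (+) y0 ` V \<noteq> {}"
      using pos by (auto simp: flat_vol_def)
    then have "(\<lambda>x. k + (1 - ?g y) *\<^sub>R x) ` (K \<inter> (+) y0 ` V) = {k}"
      using 2 by (simp add: image_constant_conv)
    ultimately show ?thesis
      by metis
  qed
qed

theorem lemma3p1:
  fixes K H :: "'a::euclidean_space set" and i :: nat and y0 :: 'a
    and f :: "'a \<Rightarrow> real"
  assumes K: "compact K" "convex K" "interior K \<noteq> {}"
    and H: "subspace H" "dim H = i" "1 \<le> i" "i \<le> DIM('a) - 1"
    and f_def: "\<And>y. f y = flat_vol (orthogonal_comp H)
                   (K \<inter> (\<lambda>v. y + v) ` orthogonal_comp H) powr (1 / real (DIM('a) - i))"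
    and y0: "y0 \<in> proj_onto H ` K"
    and cone: "{(y, t). y \<in> proj_onto H ` K \<and> 0 \<le> t \<and> t \<le> f y}
             = convex hull ((proj_onto H ` K \<times> {0}) \<union> {(y0, Sup (f ` proj_onto H ` K))})"
  shows "\<forall>y \<in> proj_onto H ` K. \<exists>z.
           K \<inter> (\<lambda>v. y + v) ` orthogonal_comp H
         = (\<lambda>x. z + (1 - mink_at (proj_onto H ` K) y0 y) *\<^sub>R x) `
             (K \<inter> (\<lambda>v. y0 + v) ` orthogonal_comp H)"
proof -
  define V P where "V = orthogonal_comp H" and "P = proj_onto H ` K"
  define M where "M = Sup (f ` P)"
  have d: "dim V = DIM('a) - i" "0 < dim V"
    using dim_orthogonal_comp[OF H(1)] H(2,4) DIM_positive[where 'a = 'a] unfolding V_def by linarith+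
  have P: "convex P" "y0 \<in> P"
    unfolding P_def using convex_linear_image[OF linear_proj_onto[OF H(1)] K(2)] y0 by auto
  note cone' = cone[folded P_def M_def]
  have vol: "flat_vol V (K \<inter> (+) y ` V) = f y ^ dim V" for y
  proof -
    have "f y = flat_vol V (K \<inter> (+) y ` V) powr (1 / real (dim V))"
      using f_def[of y] unfolding V_def d(1)[unfolded V_def] .
    with d(2) flat_vol_nonneg[of V] show ?thesis
      by (simp add: root_powr_inverse[symmetric])
  qed
  obtain y1 where "y1 \<in> P" "0 < flat_vol V (K \<inter> (+) y1 ` V)"
    using section_flat_vol_pos[OF K(1,3) H(1)] unfolding P_def V_def by blast
  moreover from this(2) have "0 < f y1"
    unfolding f_def V_def by simp
  ultimately have M: "0 < M"
    using cone_hypograph_le[OF P(1) cone'] by force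
  note gauge = mink_at_cone_hypograph[OF P(1) M cone']
  have vol0: "flat_vol V (K \<inter> (+) y0 ` V) = M ^ dim V"
    using vol gauge(1)[OF P(2)] mink_at_centre[OF P(2)] by simp
  have "flat_vol V (K \<inter> (+) y ` V) \<le> (1 - mink_at P y0 y) ^ dim V * flat_vol V (K \<inter> (+) y0 ` V)"
    if "y \<in> P" for y
    using vol[of y] gauge(1)[OF that] vol0 by (simp add: power_mult_distrib)
  then show ?thesis
    using sections_homothetic[OF K(1,2) H(1)] P(2) M vol0 gauge(2) unfolding V_def P_def by simp
qed

end
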